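(* Let $L$ be a frame. The map $\nu(F)=\bigcap_{a\in F}\mathfrak o(a)$ restricts to an order isomorphism from $(\mathsf R(L),\sqsubseteq)$ onto $(\{\mathrm{fit}(S)\mid S\in\mathcal S_c(L)\},\subseteq)$, with inverse $S\mapsto\{a\in L\mid S\subseteq\mathfrak o(a)\}$.
   Context: A frame is a complete lattice $L$ with $(\bigvee A)\wedge b=\bigvee_{a\in A}(a\wedge b)$, Heyting implication $\to$. A sublocale is a subset $S\subseteq L$ closed under all meets with $a\to s\in S$ for $a\in L,s\in S$; sublocales form a coframe $\mathsf{Sl}(L)$ under inclusion with joins $\bigvee_i S_i=\{\bigwedge A\mid A\subseteq\bigcup_i S_i\}$. $\mathfrak o(a)=\{a\to b\mid b\in L\}$, $\mathfrak c(a)={\uparrow}a$. $\mathrm{fit}(S)=\bigcap\{\mathfrak o(a)\mid S\subseteq\mathfrak o(a)\}$. $\mathcal S_c(L)$ is the set of joins in $\mathsf{Sl}(L)$ of closed sublocales $\mathfrak c(a)$. Filters are nonempty up-closed subsets closed under finite meets, ordered by reverse inclusion $\sqsubseteq$. $\mathsf R(L)$ is the set of regular filters, i.e. filters of the form $\{x\in L\mid\forall b\in G,\ b\vee x=1\}$ for a filter $G$ (equivalently, intersections of closed filters $\{x\mid x\vee a=1\}$). *)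

theory Defs
  imports Main
begin

definition frame_law :: "('a::complete_lattice) itself \<Rightarrow> bool" where
  "frame_law _ \<longleftrightarrow> (\<forall>(A::'a set) b. inf (Sup A) b = Sup ((\<lambda>a. inf a b) ` A))"

definition himp :: "'a::complete_lattice \<Rightarrow> 'a \<Rightarrow> 'a" where
  "himp a b = Sup {c. inf c a \<le> b}"

definition is_sublocale :: "('a::complete_lattice) set \<Rightarrow> bool" where
  "is_sublocale S \<longleftrightarrow> (\<forall>A. A \<subseteq> S \<longrightarrow> Inf A \<in> S) \<and> (\<forall>a s. s \<in> S \<longrightarrow> himp a s \<in> S)"

definition sl_join :: "('a::complete_lattice) set set \<Rightarrow> 'a set" where
  "sl_join \<S> = {Inf A | A. A \<subseteq> \<Union>\<S>}"

definition open_sl :: "'a::complete_lattice \<Rightarrow> 'a set" where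
  "open_sl a = {himp a b | b. True}"

definition closed_sl :: "'a::complete_lattice \<Rightarrow> 'a set" where
  "closed_sl a = {x. a \<le> x}"

definition fit :: "('a::complete_lattice) set \<Rightarrow> 'a set" where
  "fit S = \<Inter>{open_sl a | a. S \<subseteq> open_sl a}"

definition Sc :: "('a::complete_lattice) set set" where
  "Sc = {sl_join (closed_sl ` A) | A. True}"

definition is_filter :: "('a::complete_lattice) set \<Rightarrow> bool" where
  "is_filter F \<longleftrightarrow> F \<noteq> {} \<and> (\<forall>x y. x \<in> F \<longrightarrow> x \<le> y \<longrightarrow> y \<in> F)
      \<and> (\<forall>x y. x \<in> F \<longrightarrow> y \<in> F \<longrightarrow> inf x y \<in> F)"

definition filter_le :: "('a::complete_lattice) set \<Rightarrow> 'a set \<Rightarrow> bool" where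
  "filter_le F G \<longleftrightarrow> G \<subseteq> F"

definition regular_filters :: "('a::complete_lattice) set set" where
  "regular_filters = {F. \<exists>G. is_filter G \<and> F = {x. \<forall>b\<in>G. sup b x = top}}"

definition nu :: "('a::complete_lattice) set \<Rightarrow> 'a set" where
  "nu F = (\<Inter>a\<in>F. open_sl a)"

definition nu_inv :: "('a::complete_lattice) set \<Rightarrow> 'a set" where
  "nu_inv S = {a. S \<subseteq> open_sl a}"

end

theory Submission
  imports Defs
begin

text \<open>Write cod(G) for the set of elements codisjoint from every element of G. An open
  sublocale o(a) contains the join of the closed sublocales c(c), c \<in> A, iff a \<in> cod(A):
  if a is codisjoint from every c, then a \<rightarrow> x = x for all x above some c \<in> A, hence also for
  their meets; conversely a \<or> c \<in> o(a) forces a \<or> c = 1. So the filter attached to such a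
  join is cod(A), and by distributivity the regular filters are exactly the sets cod(A). On
  these, \<nu> and S \<mapsto> {a. S \<subseteq> o(a)} form an antitone Galois connection that is closed on
  the filter side and whose closure on the sublocale side is fit.\<close>

definition codisjoints :: "('a::complete_lattice) set \<Rightarrow> 'a set" where
  "codisjoints B = {x. \<forall>b\<in>B. sup b x = top}"

lemma frame_inf_sup_distrib:
  assumes "frame_law TYPE('a::complete_lattice)"
  shows "inf (z::'a) (sup x y) = sup (inf z x) (inf z y)"
proof -
  have "inf (Sup {x, y}) z = Sup ((\<lambda>a. inf a z) ` {x, y})"
    using assms unfolding frame_law_def by blast
  thus ?thesis by (simp add: inf_commute)
qed

lemma himp_inf_le:
  assumes "frame_law TYPE('a::complete_lattice)"
  shows "inf (himp a x) a \<le> (x::'a)"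
proof -
  have "inf (Sup {c. inf c a \<le> x}) a = Sup ((\<lambda>c. inf c a) ` {c. inf c a \<le> x})"
    using assms unfolding frame_law_def by blast
  also have "\<dots> \<le> x" by (rule SUP_least) simp
  finally show ?thesis unfolding himp_def .
qed

lemma le_himpI: "inf c a \<le> x \<Longrightarrow> (c::'a::complete_lattice) \<le> himp a x"
  unfolding himp_def by (rule Sup_upper) simp

lemma himp_mono:
  assumes "frame_law TYPE('a::complete_lattice)" "y \<le> (x::'a)"
  shows "himp a y \<le> himp a x"
  using himp_inf_le[OF assms(1), of a y] assms(2) by (intro le_himpI) simp

lemma himp_le_of_codisjoint:
  assumes "frame_law TYPE('a::complete_lattice)" "sup a x = (top::'a)"
  shows "himp a x \<le> x"
proof -
  let ?h = "himp a x"
  have "?h = inf ?h (sup a x)" using assms(2) by simp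
  also have "\<dots> = sup (inf ?h a) (inf ?h x)" by (rule frame_inf_sup_distrib[OF assms(1)])
  also have "\<dots> \<le> x" using himp_inf_le[OF assms(1), of a x] by simp
  finally show ?thesis .
qed

lemma himp_eq_top_of_le: "a \<le> b \<Longrightarrow> himp a (b::'a::complete_lattice) = top"
  by (rule top_le, rule le_himpI) simp

lemma sup_in_open_sl_imp_top:
  assumes "frame_law TYPE('a::complete_lattice)" "sup a c \<in> open_sl (a::'a)"
  shows "sup a c = top"
proof -
  obtain b where b: "sup a c = himp a b" using assms(2) unfolding open_sl_def by blast
  then have "inf (himp a b) a = a" by (metis inf_absorb2 sup_ge1)
  then have "a \<le> b" using himp_inf_le[OF assms(1), of a b] by simp
  thus ?thesis using b himp_eq_top_of_le by simp
qed

lemma Inf_in_open_sl: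
  assumes "frame_law TYPE('a::complete_lattice)" "\<forall>x\<in>B. sup a x = (top::'a)"
  shows "Inf B \<in> open_sl a"
proof -
  have "himp a (Inf B) = Inf B"
  proof (rule antisym)
    show "himp a (Inf B) \<le> Inf B"
    proof (rule Inf_greatest)
      fix x assume "x \<in> B"
      have "himp a (Inf B) \<le> himp a x"
        by (rule himp_mono[OF assms(1)]) (simp add: Inf_lower \<open>x \<in> B\<close>)
      also have "\<dots> \<le> x" using himp_le_of_codisjoint[OF assms(1)] assms(2) \<open>x \<in> B\<close> by blast
      finally show "himp a (Inf B) \<le> x" .
    qed
    show "Inf B \<le> himp a (Inf B)" by (rule le_himpI) simp
  qed
  thus ?thesis unfolding open_sl_def by (metis (mono_tags, lifting) mem_Collect_eq)
qed

lemma nu_inv_sl_join_closed_sl: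
  assumes "frame_law TYPE('a::complete_lattice)"
  shows "nu_inv (sl_join (closed_sl ` A)) = codisjoints (A::'a set)"
proof (intro set_eqI iffI)
  fix a assume "a \<in> nu_inv (sl_join (closed_sl ` A))"
  hence S: "sl_join (closed_sl ` A) \<subseteq> open_sl a" unfolding nu_inv_def by simp
  have "sup c a = top" if "c \<in> A" for c
  proof -
    have "Inf {sup a c} \<in> sl_join (closed_sl ` A)"
      using that unfolding sl_join_def closed_sl_def by fastforce
    hence "sup a c = top" using S sup_in_open_sl_imp_top[OF assms] by auto
    thus ?thesis by (simp add: sup_commute)
  qed
  thus "a \<in> codisjoints A" unfolding codisjoints_def by blast
next
  fix a assume a: "a \<in> codisjoints A"
  have "Inf B \<in> open_sl a" if B: "B \<subseteq> \<Union> (closed_sl ` A)" for B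
  proof (rule Inf_in_open_sl[OF assms], intro ballI)
    fix x assume "x \<in> B"
    then obtain c where "c \<in> A" "c \<le> x" using B unfolding closed_sl_def by auto
    hence "sup c a \<le> sup a x" by (simp add: le_supI1 le_supI2)
    moreover have "sup c a = top" using a \<open>c \<in> A\<close> unfolding codisjoints_def by simp
    ultimately show "sup a x = top" by (metis top_le)
  qed
  thus "a \<in> nu_inv (sl_join (closed_sl ` A))" unfolding nu_inv_def sl_join_def by blast
qed

lemma is_filter_codisjoints:
  assumes "frame_law TYPE('a::complete_lattice)"
  shows "is_filter (codisjoints (B::'a set))"
  unfolding is_filter_def
proof (intro conjI allI impI)
  have "top \<in> codisjoints B" unfolding codisjoints_def by simp
  thus "codisjoints B \<noteq> {}" by blast
next
  fix x y assume x: "x \<in> codisjoints B" and "x \<le> y"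
  have "sup b y = top" if "b \<in> B" for b
  proof (rule top_le)
    have "top = sup b x" using x that unfolding codisjoints_def by simp
    also have "\<dots> \<le> sup b y" using \<open>x \<le> y\<close> by (rule sup_mono[OF order_refl])
    finally show "top \<le> sup b y" .
  qed
  thus "y \<in> codisjoints B" unfolding codisjoints_def by blast
next
  fix x y assume x: "x \<in> codisjoints B" and y: "y \<in> codisjoints B"
  have "sup b (inf x y) = top" if "b \<in> B" for b
  proof (rule top_le)
    have "top = inf (sup b x) (sup b y)" using x y that unfolding codisjoints_def by simp
    also have "\<dots> = sup (inf (sup b x) b) (inf (sup b x) y)" by (rule frame_inf_sup_distrib[OF assms])
    also have "\<dots> = sup (inf (sup b x) b) (sup (inf y b) (inf y x))"
      by (simp add: frame_inf_sup_distrib[OF assms] inf_commute)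
    also have "\<dots> \<le> sup b (inf x y)" by (simp add: le_supI1 le_supI2 inf_commute)
    finally show "top \<le> sup b (inf x y)" .
  qed
  thus "inf x y \<in> codisjoints B" unfolding codisjoints_def by blast
qed

lemma subset_codisjoints_codisjoints: "B \<subseteq> codisjoints (codisjoints B)"
  unfolding codisjoints_def by (auto simp: sup_commute)

lemma codisjoints_antimono: "B \<subseteq> C \<Longrightarrow> codisjoints C \<subseteq> codisjoints B"
  unfolding codisjoints_def by blast

lemma codisjoints_codisjoints_codisjoints:
  "codisjoints (codisjoints (codisjoints B)) = codisjoints B"
  by (meson antisym codisjoints_antimono subset_codisjoints_codisjoints)

lemma regular_filters_eq_range_codisjoints:
  assumes "frame_law TYPE('a::complete_lattice)"
  shows "(regular_filters :: 'a set set) = range codisjoints"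
proof -
  have regular: "regular_filters = codisjoints ` {G :: 'a set. is_filter G}"
    unfolding regular_filters_def codisjoints_def by blast
  have "codisjoints B = codisjoints (codisjoints (codisjoints B))" for B :: "'a set"
    by (rule codisjoints_codisjoints_codisjoints[symmetric])
  hence "range codisjoints \<subseteq> codisjoints ` {G :: 'a set. is_filter G}"
    using is_filter_codisjoints[OF assms] by blast
  thus ?thesis unfolding regular by blast
qed

lemma fit_eq_nu_nu_inv: "fit S = nu (nu_inv S)"
  unfolding fit_def nu_def nu_inv_def by auto

lemma nu_inv_nu_nu_inv: "nu_inv (nu (nu_inv S)) = nu_inv S"
  unfolding nu_def nu_inv_def by blast

lemma nu_antimono: "G \<subseteq> F \<Longrightarrow> nu F \<subseteq> nu G"
  unfolding nu_def by blast

lemma nu_inv_antimono: "S \<subseteq> T \<Longrightarrow> nu_inv T \<subseteq> nu_inv S"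
  unfolding nu_inv_def by blast

lemma fit_Sc_eq_nu_image:
  assumes "frame_law TYPE('a::complete_lattice)"
  shows "{fit S | S. S \<in> (Sc :: 'a set set)} = nu ` range codisjoints"
proof -
  have "{fit S | S. S \<in> (Sc :: 'a set set)} = range (\<lambda>A. fit (sl_join (closed_sl ` A)))"
    unfolding Sc_def by blast
  also have "\<dots> = range (\<lambda>A. nu (codisjoints A))"
    by (simp add: fit_eq_nu_nu_inv nu_inv_sl_join_closed_sl[OF assms])
  finally show ?thesis by (simp add: image_image)
qed

lemma nu_inv_nu_codisjoints:
  assumes "frame_law TYPE('a::complete_lattice)"
  shows "nu_inv (nu (codisjoints (A::'a set))) = codisjoints A"
  using nu_inv_nu_nu_inv nu_inv_sl_join_closed_sl[OF assms] by metis

lemma nu_inv_nu_regular: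
  assumes "frame_law TYPE('a::complete_lattice)" "(F::'a set) \<in> regular_filters"
  shows "nu_inv (nu F) = F"
  using assms(2) nu_inv_nu_codisjoints[OF assms(1)]
  unfolding regular_filters_eq_range_codisjoints[OF assms(1)] by blast

lemma nu_subset_nu_iff_regular:
  assumes "frame_law TYPE('a::complete_lattice)"
    and "(F::'a set) \<in> regular_filters" "G \<in> regular_filters"
  shows "nu F \<subseteq> nu G \<longleftrightarrow> G \<subseteq> F"
  using nu_antimono nu_inv_antimono nu_inv_nu_regular[OF assms(1)] assms(2,3) by metis

theorem mainTheorem13:
  assumes "frame_law TYPE('a::complete_lattice)"
  shows "bij_betw (nu :: 'a set \<Rightarrow> 'a set) regular_filters {fit S | S. S \<in> (Sc :: 'a set set)}
       \<and> (\<forall>F\<in>(regular_filters :: 'a set set). \<forall>G\<in>regular_filters.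
            filter_le F G \<longleftrightarrow> nu F \<subseteq> nu G)
       \<and> (\<forall>F\<in>(regular_filters :: 'a set set). nu_inv (nu F) = F)
       \<and> (\<forall>T\<in>{fit S | S. S \<in> (Sc :: 'a set set)}. nu_inv T \<in> regular_filters \<and> nu (nu_inv T) = T)"
proof -
  have fits: "{fit S | S. S \<in> (Sc :: 'a set set)} = nu ` regular_filters"
    using fit_Sc_eq_nu_image[OF assms] regular_filters_eq_range_codisjoints[OF assms] by simp
  have inv: "\<forall>F\<in>(regular_filters :: 'a set set). nu_inv (nu F) = F"
    using nu_inv_nu_regular[OF assms] by blast
  then have "inj_on nu (regular_filters :: 'a set set)"
    by (metis inj_on_inverseI)
  then have bij: "bij_betw (nu :: 'a set \<Rightarrow> 'a set) regular_filters {fit S | S. S \<in> Sc}"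
    unfolding bij_betw_def fits by blast
  have "\<forall>T\<in>{fit S | S. S \<in> (Sc :: 'a set set)}. nu_inv T \<in> regular_filters \<and> nu (nu_inv T) = T"
    unfolding fits using inv by (simp add: image_iff)
  with bij inv show ?thesis
    unfolding filter_le_def by (simp add: nu_subset_nu_iff_regular[OF assms])
qed

end
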